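(* Let $R$ be a commutative ring and $M$ an $R$-module. The following are equivalent: (1) $M$ is Noetherian; (2) $M$ is uniformly $(R\setminus\mathfrak p)$-Noetherian for every prime ideal $\mathfrak p$ of $R$; (3) $M$ is uniformly $(R\setminus\mathfrak m)$-Noetherian for every maximal ideal $\mathfrak m$ of $R$.
   Context: For a multiplicative subset $S$ of $R$, an $R$-module $M$ is uniformly $S$-Noetherian if there exists a single $s\in S$ such that for every submodule $N$ of $M$ there is a finitely generated submodule $F\subseteq N$ with $sN\subseteq F$. *)

theory Defs
  imports "HOL-Algebra.Module" "HOL-Algebra.Ideal"
begin

definition gen_submodule :: "('a, 'c) ring_scheme \<Rightarrow> ('a, 'b, 'm) module_scheme \<Rightarrow> 'b set \<Rightarrow> 'b set" where
  "gen_submodule R M A = \<Inter> {H. submodule H R M \<and> A \<subseteq> H}"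

definition fg_submodule :: "('a, 'c) ring_scheme \<Rightarrow> ('a, 'b, 'm) module_scheme \<Rightarrow> 'b set \<Rightarrow> bool" where
  "fg_submodule R M N \<longleftrightarrow> submodule N R M \<and>
     (\<exists>A. finite A \<and> A \<subseteq> carrier M \<and> N = gen_submodule R M A)"

definition noetherian_module :: "('a, 'c) ring_scheme \<Rightarrow> ('a, 'b, 'm) module_scheme \<Rightarrow> bool" where
  "noetherian_module R M \<longleftrightarrow> (\<forall>N. submodule N R M \<longrightarrow> fg_submodule R M N)"

definition uniformly_S_noetherian :: "('a, 'c) ring_scheme \<Rightarrow> ('a, 'b, 'm) module_scheme \<Rightarrow> 'a set \<Rightarrow> bool" where
  "uniformly_S_noetherian R M S \<longleftrightarrow>
     (\<exists>s\<in>S. \<forall>N. submodule N R M \<longrightarrow>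
        (\<exists>F. fg_submodule R M F \<and> F \<subseteq> N \<and> (\<lambda>x. s \<odot>\<^bsub>M\<^esub> x) ` N \<subseteq> F))"

end

theory Submission
  imports "HOL-Algebra.Ring_Divisibility" Defs
begin

text \<open>
  Noetherian modules are trivially uniformly \<open>S\<close>-Noetherian for every \<open>S \<ni> 1\<close>, and maximal
  ideals are prime; so the content is that uniform Noetherianity at every maximal ideal forces
  Noetherianity. The elements \<open>s\<close> that witness uniform Noetherianity form an ideal of \<open>R\<close>
  (sums: join the two finitely generated submodules; multiples: \<open>(r s) N = r (s N)\<close>).
  By hypothesis this ideal meets the complement of every maximal ideal, hence it contains \<open>1\<close>,
  and \<open>1\<close> being a witness means exactly that every submodule is finitely generated.
\<close>

lemma (in ring) ideal_subset_maximalideal: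
  assumes "ideal I R" and "\<one> \<notin> I"
  obtains m where "maximalideal m R" and "I \<subseteq> m"
proof -
  define A where "A = {J. ideal J R \<and> I \<subseteq> J \<and> \<one> \<notin> J}"
  have "\<exists>m\<in>A. \<forall>J\<in>A. m \<subseteq> J \<longrightarrow> J = m"
  proof (rule subset_Zorn_nonempty)
    show "A \<noteq> {}"
      using assms unfolding A_def by blast
  next
    fix C assume "C \<noteq> {}" and chain: "subset.chain A C"
    then have "C \<subseteq> A"
      unfolding pred_on.chain_def by blast
    then have "subset.chain {J. ideal J R} C"
      using chain unfolding A_def pred_on.chain_def by blast
    with \<open>C \<noteq> {}\<close> have "ideal (\<Union>C) R"
      using chain_Union_is_ideal[of C] by simp
    moreover have "I \<subseteq> \<Union>C" "\<one> \<notin> \<Union>C"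
      using \<open>C \<noteq> {}\<close> \<open>C \<subseteq> A\<close> unfolding A_def by auto
    ultimately show "\<Union>C \<in> A"
      unfolding A_def by blast
  qed
  then obtain m where "m \<in> A" and m_max: "\<And>J. J \<in> A \<Longrightarrow> m \<subseteq> J \<Longrightarrow> J = m"
    by blast
  then have m: "ideal m R" "I \<subseteq> m" "\<one> \<notin> m"
    unfolding A_def by auto
  have "maximalideal m R"
  proof (rule maximalidealI[OF \<open>ideal m R\<close>])
    show "carrier R \<noteq> m"
      using \<open>\<one> \<notin> m\<close> by blast
    fix J assume J: "ideal J R" "m \<subseteq> J" "J \<subseteq> carrier R"
    show "J = m \<or> J = carrier R"
    proof (cases "\<one> \<in> J")
      case True
      then show ?thesis using J ideal.one_imp_carrier by blast
    next
      case False
      with J m have "J \<in> A"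
        unfolding A_def by blast
      then show ?thesis using J m_max by blast
    qed
  qed
  with m that show ?thesis by blast
qed

definition noetherian_multiplier :: "('a, 'c) ring_scheme \<Rightarrow> ('a, 'b, 'm) module_scheme \<Rightarrow> 'a \<Rightarrow> bool" where
  "noetherian_multiplier R M s \<longleftrightarrow> (\<forall>N. submodule N R M \<longrightarrow>
     (\<exists>F. fg_submodule R M F \<and> F \<subseteq> N \<and> (\<lambda>x. s \<odot>\<^bsub>M\<^esub> x) ` N \<subseteq> F))"

lemma uniformly_S_noetherian_iff:
  "uniformly_S_noetherian R M S \<longleftrightarrow> (\<exists>s\<in>S. noetherian_multiplier R M s)"
  unfolding uniformly_S_noetherian_def noetherian_multiplier_def ..

context module
begin

lemma submodule_zero_closed: "submodule H R M \<Longrightarrow> \<zero>\<^bsub>M\<^esub> \<in> H"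
  using subgroup.one_closed[OF submodule.axioms(1)] by fastforce

lemma submodule_gen_submodule:
  assumes "A \<subseteq> carrier M"
  shows "submodule (gen_submodule R M A) R M"
  unfolding gen_submodule_def
proof (rule submoduleI)
  let ?S = "{H. submodule H R M \<and> A \<subseteq> H}"
  show "\<Inter>?S \<subseteq> carrier M"
    using carrier_is_submodule assms by blast
  show "\<zero>\<^bsub>M\<^esub> \<in> \<Inter>?S"
    using submodule_zero_closed by blast
  show "\<ominus>\<^bsub>M\<^esub> a \<in> \<Inter>?S" if "a \<in> \<Inter>?S" for a
    using that submoduleE(3) by blast
  show "a \<oplus>\<^bsub>M\<^esub> b \<in> \<Inter>?S" if "a \<in> \<Inter>?S" "b \<in> \<Inter>?S" for a b
    using that submoduleE(5) by blast
  show "r \<odot>\<^bsub>M\<^esub> a \<in> \<Inter>?S" if "r \<in> carrier R" "a \<in> \<Inter>?S" for r a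
    using that submoduleE(4) by blast
qed

lemma gen_submodule_incl: "A \<subseteq> gen_submodule R M A"
  unfolding gen_submodule_def by blast

lemma gen_submodule_minimal: "submodule H R M \<Longrightarrow> A \<subseteq> H \<Longrightarrow> gen_submodule R M A \<subseteq> H"
  unfolding gen_submodule_def by blast

lemma gen_submodule_mono: "A \<subseteq> B \<Longrightarrow> B \<subseteq> carrier M \<Longrightarrow> gen_submodule R M A \<subseteq> gen_submodule R M B"
  using gen_submodule_incl gen_submodule_minimal submodule_gen_submodule by (meson order_trans)

lemma fg_submodule_gen_empty: "fg_submodule R M (gen_submodule R M {})"
  unfolding fg_submodule_def using submodule_gen_submodule[of "{}"] by blast

lemma fg_submodule_join:
  assumes "submodule N R M" "fg_submodule R M F1" "fg_submodule R M F2" "F1 \<subseteq> N" "F2 \<subseteq> N"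
  obtains F where "fg_submodule R M F" "F1 \<union> F2 \<subseteq> F" "F \<subseteq> N"
proof -
  obtain A1 where A1: "finite A1" "A1 \<subseteq> carrier M" "F1 = gen_submodule R M A1"
    using assms(2) unfolding fg_submodule_def by blast
  obtain A2 where A2: "finite A2" "A2 \<subseteq> carrier M" "F2 = gen_submodule R M A2"
    using assms(3) unfolding fg_submodule_def by blast
  let ?F = "gen_submodule R M (A1 \<union> A2)"
  have "fg_submodule R M ?F"
    unfolding fg_submodule_def using A1 A2 submodule_gen_submodule[of "A1 \<union> A2"] by blast
  moreover have "F1 \<union> F2 \<subseteq> ?F"
    using A1 A2 gen_submodule_mono[of _ "A1 \<union> A2"] by (metis Un_subset_iff sup_ge1 sup_ge2)
  moreover have "A1 \<union> A2 \<subseteq> N"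
    using A1 A2 assms(4,5) gen_submodule_incl by blast
  then have "?F \<subseteq> N"
    using gen_submodule_minimal[OF assms(1)] by blast
  ultimately show ?thesis
    using that by blast
qed

lemma noetherian_multiplier_zero: "noetherian_multiplier R M \<zero>\<^bsub>R\<^esub>"
  unfolding noetherian_multiplier_def
proof (intro allI impI)
  fix N assume N: "submodule N R M"
  let ?F = "gen_submodule R M {}"
  have "\<zero>\<^bsub>M\<^esub> \<in> ?F"
    using submodule_zero_closed submodule_gen_submodule[of "{}"] by blast
  then have "(\<lambda>x. \<zero>\<^bsub>R\<^esub> \<odot>\<^bsub>M\<^esub> x) ` N \<subseteq> ?F"
    using submoduleE(1)[OF N] by auto
  then show "\<exists>F. fg_submodule R M F \<and> F \<subseteq> N \<and> (\<lambda>x. \<zero>\<^bsub>R\<^esub> \<odot>\<^bsub>M\<^esub> x) ` N \<subseteq> F"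
    using fg_submodule_gen_empty gen_submodule_minimal[OF N] by blast
qed

lemma noetherian_multiplier_add:
  assumes "a \<in> carrier R" "b \<in> carrier R" "noetherian_multiplier R M a" "noetherian_multiplier R M b"
  shows "noetherian_multiplier R M (a \<oplus>\<^bsub>R\<^esub> b)"
  unfolding noetherian_multiplier_def
proof (intro allI impI)
  fix N assume N: "submodule N R M"
  obtain F1 where F1: "fg_submodule R M F1" "F1 \<subseteq> N" "(\<lambda>x. a \<odot>\<^bsub>M\<^esub> x) ` N \<subseteq> F1"
    using assms(3) N unfolding noetherian_multiplier_def by blast
  obtain F2 where F2: "fg_submodule R M F2" "F2 \<subseteq> N" "(\<lambda>x. b \<odot>\<^bsub>M\<^esub> x) ` N \<subseteq> F2"
    using assms(4) N unfolding noetherian_multiplier_def by blast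
  obtain F where F: "fg_submodule R M F" "F1 \<union> F2 \<subseteq> F" "F \<subseteq> N"
    using fg_submodule_join[OF N F1(1) F2(1) F1(2) F2(2)] .
  have "(a \<oplus>\<^bsub>R\<^esub> b) \<odot>\<^bsub>M\<^esub> x \<in> F" if "x \<in> N" for x
  proof -
    have "a \<odot>\<^bsub>M\<^esub> x \<in> F" "b \<odot>\<^bsub>M\<^esub> x \<in> F"
      using that F1(3) F2(3) F(2) by blast+
    moreover have "submodule F R M"
      using F(1) unfolding fg_submodule_def by blast
    ultimately have "a \<odot>\<^bsub>M\<^esub> x \<oplus>\<^bsub>M\<^esub> b \<odot>\<^bsub>M\<^esub> x \<in> F"
      using submoduleE(5) by blast
    moreover have "x \<in> carrier M"
      using that submoduleE(1)[OF N] by blast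
    ultimately show ?thesis
      using assms(1,2) by (simp add: smult_l_distr)
  qed
  with F show "\<exists>F. fg_submodule R M F \<and> F \<subseteq> N \<and> (\<lambda>x. (a \<oplus>\<^bsub>R\<^esub> b) \<odot>\<^bsub>M\<^esub> x) ` N \<subseteq> F"
    by blast
qed

lemma noetherian_multiplier_mult:
  assumes "a \<in> carrier R" "r \<in> carrier R" "noetherian_multiplier R M a"
  shows "noetherian_multiplier R M (r \<otimes>\<^bsub>R\<^esub> a)"
  unfolding noetherian_multiplier_def
proof (intro allI impI)
  fix N assume N: "submodule N R M"
  obtain F where F: "fg_submodule R M F" "F \<subseteq> N" "(\<lambda>x. a \<odot>\<^bsub>M\<^esub> x) ` N \<subseteq> F"
    using assms(3) N unfolding noetherian_multiplier_def by blast
  have "(\<lambda>x. (r \<otimes>\<^bsub>R\<^esub> a) \<odot>\<^bsub>M\<^esub> x) ` N \<subseteq> F"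
  proof clarify
    fix x assume "x \<in> N"
    then have "(r \<otimes>\<^bsub>R\<^esub> a) \<odot>\<^bsub>M\<^esub> x = r \<odot>\<^bsub>M\<^esub> (a \<odot>\<^bsub>M\<^esub> x)"
      using assms(1,2) submoduleE(1)[OF N] smult_assoc1 by blast
    then show "(r \<otimes>\<^bsub>R\<^esub> a) \<odot>\<^bsub>M\<^esub> x \<in> F"
      using \<open>x \<in> N\<close> F assms(2) submoduleE(4) unfolding fg_submodule_def by auto
  qed
  with F show "\<exists>F. fg_submodule R M F \<and> F \<subseteq> N \<and> (\<lambda>x. (r \<otimes>\<^bsub>R\<^esub> a) \<odot>\<^bsub>M\<^esub> x) ` N \<subseteq> F"
    by blast
qed

lemma ideal_noetherian_multipliers: "ideal {s \<in> carrier R. noetherian_multiplier R M s} R"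
proof (rule idealI[OF R.ring_axioms])
  show "subgroup {s \<in> carrier R. noetherian_multiplier R M s} (add_monoid R)"
  proof (rule R.add.subgroupI)
    show "{s \<in> carrier R. noetherian_multiplier R M s} \<noteq> {}"
      using noetherian_multiplier_zero by blast
    show "\<ominus>\<^bsub>R\<^esub> a \<in> {s \<in> carrier R. noetherian_multiplier R M s}"
      if "a \<in> {s \<in> carrier R. noetherian_multiplier R M s}" for a
      using that noetherian_multiplier_mult[of a "\<ominus>\<^bsub>R\<^esub> \<one>\<^bsub>R\<^esub>"] by (simp add: R.l_minus)
  qed (auto intro: noetherian_multiplier_add)
next
  fix a r assume a: "a \<in> {s \<in> carrier R. noetherian_multiplier R M s}" and r: "r \<in> carrier R"
  then show ra: "r \<otimes>\<^bsub>R\<^esub> a \<in> {s \<in> carrier R. noetherian_multiplier R M s}"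
    using noetherian_multiplier_mult by blast
  from a r have "a \<otimes>\<^bsub>R\<^esub> r = r \<otimes>\<^bsub>R\<^esub> a"
    using R.m_comm by blast
  with ra show "a \<otimes>\<^bsub>R\<^esub> r \<in> {s \<in> carrier R. noetherian_multiplier R M s}"
    by simp
qed

lemma image_smult_one: "H \<subseteq> carrier M \<Longrightarrow> (\<lambda>x. \<one>\<^bsub>R\<^esub> \<odot>\<^bsub>M\<^esub> x) ` H = H"
  by (force simp: subset_iff)

lemma noetherian_multiplier_one_iff: "noetherian_multiplier R M \<one>\<^bsub>R\<^esub> \<longleftrightarrow> noetherian_module R M"
proof
  assume one: "noetherian_multiplier R M \<one>\<^bsub>R\<^esub>"
  show "noetherian_module R M"
    unfolding noetherian_module_def
  proof (intro allI impI)
    fix N assume N: "submodule N R M"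
    then obtain F where "fg_submodule R M F" "F \<subseteq> N" "(\<lambda>x. \<one>\<^bsub>R\<^esub> \<odot>\<^bsub>M\<^esub> x) ` N \<subseteq> F"
      using one unfolding noetherian_multiplier_def by blast
    then show "fg_submodule R M N"
      using image_smult_one[OF submoduleE(1)[OF N]] by (metis subset_antisym)
  qed
next
  assume "noetherian_module R M"
  then show "noetherian_multiplier R M \<one>\<^bsub>R\<^esub>"
    unfolding noetherian_module_def noetherian_multiplier_def
    using image_smult_one submoduleE(1) by blast
qed

lemma noetherian_if_uniformly_noetherian_at_maximalideals:
  assumes "\<And>m. maximalideal m R \<Longrightarrow> uniformly_S_noetherian R M (carrier R - m)"
  shows "noetherian_module R M"
proof (rule ccontr)
  assume "\<not> noetherian_module R M"
  then have "\<one>\<^bsub>R\<^esub> \<notin> {s \<in> carrier R. noetherian_multiplier R M s}"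
    using noetherian_multiplier_one_iff by blast
  then obtain m where "maximalideal m R" and "{s \<in> carrier R. noetherian_multiplier R M s} \<subseteq> m"
    using R.ideal_subset_maximalideal[OF ideal_noetherian_multipliers] by blast
  then show False
    using assms unfolding uniformly_S_noetherian_iff by blast
qed

lemma uniformly_S_noetherian_if_noetherian:
  "noetherian_module R M \<Longrightarrow> \<one>\<^bsub>R\<^esub> \<in> S \<Longrightarrow> uniformly_S_noetherian R M S"
  unfolding uniformly_S_noetherian_iff using noetherian_multiplier_one_iff by blast

end

theorem proposition2p16:
  fixes R :: "('a, 'c) ring_scheme" and M :: "('a, 'b, 'm) module_scheme"
  assumes "module R M"
  shows "(noetherian_module R M \<longleftrightarrow>
            (\<forall>P. primeideal P R \<longrightarrow> uniformly_S_noetherian R M (carrier R - P)))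
       \<and> (noetherian_module R M \<longleftrightarrow>
            (\<forall>m. maximalideal m R \<longrightarrow> uniformly_S_noetherian R M (carrier R - m)))"
proof -
  interpret module R M by fact
  let ?at_primes = "\<forall>P. primeideal P R \<longrightarrow> uniformly_S_noetherian R M (carrier R - P)"
  let ?at_maximals = "\<forall>m. maximalideal m R \<longrightarrow> uniformly_S_noetherian R M (carrier R - m)"
  have "\<one>\<^bsub>R\<^esub> \<in> carrier R - P" if "primeideal P R" for P
    using that primeideal.I_notcarr primeideal.axioms(1) ideal.one_imp_carrier by blast
  then have noetherian_at_primes: "noetherian_module R M \<Longrightarrow> ?at_primes"
    using uniformly_S_noetherian_if_noetherian by simp
  have primes_maximals: "?at_primes \<Longrightarrow> ?at_maximals"
    using R.maximalideal_prime by simp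
  have maximals_noetherian: "?at_maximals \<Longrightarrow> noetherian_module R M"
    using noetherian_if_uniformly_noetherian_at_maximalideals by simp
  show ?thesis
    using noetherian_at_primes primes_maximals maximals_noetherian by argo
qed

end
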